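(* Over all integers $m\ge2$, $k\ge1$ and real $\alpha\in(1,m^{1/k})$, the quantity $\max\{V_J(m,k,\alpha),V_H(m,k,\alpha)\}$ is minimized at $m=2$, $k=1$, $\alpha=\frac32$, where its value is $\frac{5}{6\ln2}$; that is, $\max\{V_J(m,k,\alpha),V_H(m,k,\alpha)\}\ge\frac{5}{6\ln2}$ for every such $(m,k,\alpha)$, with equality at $(2,1,\frac32)$.
   Context: $V_J(m,k,\alpha)=\frac{k}{\ln m}\left(\left(1-\frac{\alpha}{m^{1/k}}\right)\Sigma^{\alpha,\mathrm{prim}}_{m,k}+\left(1-\frac1\alpha\right)\Sigma^{\alpha,\mathrm{sec}}_{m,k}\right)$ and $V_H(m,k,\alpha)=\frac{k}{\ln m}\left(\alpha+\frac{m^{1/k}}{\alpha}-2\right)$. Here $\mathcal{S}^{\alpha,\mathrm{prim}}_{m,k}=\{m^{(\kappa-1)/k}\}_{\kappa\in[k]}\cup\{\alpha m^{(\kappa-1)/k}\}_{\kappa\in[k]}$, $\mathcal{S}^{\alpha,\mathrm{sec}}_{m,k}=\{m^{(\kappa-1)/k}\}_{\kappa\in[k]}\cup\{\frac1\alpha m^{\kappa/k}\}_{\kappa\in[k]}$, $\Sigma^{\alpha,\mathrm{prim}}_{m,k}=\sum_{\emptyset\ne\mathcal{N}\subseteq\mathcal{S}^{\alpha,\mathrm{prim}}_{m,k}}\frac{(-1)^{|\mathcal{N}|+1}}{\mathrm{LCM}(\mathcal{N})}$, $\Sigma^{\alpha,\mathrm{sec}}_{m,k}=\sum_{\emptyset\ne\mathcal{N}\subseteq\mathcal{S}^{\alpha,\mathrm{sec}}_{m,k}}\frac{(-1)^{|\mathcal{N}|+1}}{\mathrm{LCM}(\mathcal{N})}$.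 For a finite $\mathcal{N}\subseteq\mathbb{R}_{>0}$, $\mathrm{LCM}(\mathcal{N})$ is the smallest positive real that is an integer multiple of every element of $\mathcal{N}$, or $\infty$ if none exists; $1/\infty=0$. *)

theory Defs
  imports Complex_Main
begin

definition common_multiples :: "real set \<Rightarrow> real set" where
  "common_multiples N = {L. L > 0 \<and> (\<forall>x\<in>N. \<exists>j::int. L = of_int j * x)}"

text \<open>1 / LCM(N), where LCM(N) is the smallest common positive multiple,
  and 1/\<infinity> = 0 if there is none.\<close>
definition inv_LCM :: "real set \<Rightarrow> real" where
  "inv_LCM N = (if common_multiples N = {} then 0
                else 1 / (LEAST L. L \<in> common_multiples N))"

definition S_prim :: "nat \<Rightarrow> nat \<Rightarrow> real \<Rightarrow> real set" where
  "S_prim m k \<alpha> = (\<lambda>\<kappa>. real m powr ((real \<kappa> - 1) / real k)) ` {1..k}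
                 \<union> (\<lambda>\<kappa>. \<alpha> * real m powr ((real \<kappa> - 1) / real k)) ` {1..k}"

definition S_sec :: "nat \<Rightarrow> nat \<Rightarrow> real \<Rightarrow> real set" where
  "S_sec m k \<alpha> = (\<lambda>\<kappa>. real m powr ((real \<kappa> - 1) / real k)) ` {1..k}
                 \<union> (\<lambda>\<kappa>. (1 / \<alpha>) * real m powr (real \<kappa> / real k)) ` {1..k}"

definition incl_excl_sum :: "real set \<Rightarrow> real" where
  "incl_excl_sum S = (\<Sum>N \<in> Pow S - {{}}. (-1) ^ (card N + 1) * inv_LCM N)"

definition Sigma_prim :: "nat \<Rightarrow> nat \<Rightarrow> real \<Rightarrow> real" where
  "Sigma_prim m k \<alpha> = incl_excl_sum (S_prim m k \<alpha>)"

definition Sigma_sec :: "nat \<Rightarrow> nat \<Rightarrow> real \<Rightarrow> real" where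
  "Sigma_sec m k \<alpha> = incl_excl_sum (S_sec m k \<alpha>)"

definition V_J :: "nat \<Rightarrow> nat \<Rightarrow> real \<Rightarrow> real" where
  "V_J m k \<alpha> = real k / ln (real m) *
     ((1 - \<alpha> / real m powr (1 / real k)) * Sigma_prim m k \<alpha>
      + (1 - 1 / \<alpha>) * Sigma_sec m k \<alpha>)"

definition V_H :: "nat \<Rightarrow> nat \<Rightarrow> real \<Rightarrow> real" where
  "V_H m k \<alpha> = real k / ln (real m) * (\<alpha> + real m powr (1 / real k) / \<alpha> - 2)"

end

theory Submission
  imports Defs "HOL-Analysis.Harmonic_Numbers"
begin

(* Put a = \<alpha> and b = m^(1/k) / \<alpha>, so that a, b > 1, ln m / k = ln (a b) and
   V_H = (a + b - 2) / ln (a b).  The sum \<Sigma>(S) is the density of the positive reals that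
   are integer multiples of an element of S (inclusion-exclusion for the number of such
   multiples up to T), so it is monotone in S.  As {1, a} is contained in S^prim and {1, b}
   in S^sec, V_J is at least pair_weight a b \<epsilon>_a \<epsilon>_b / ln (a b), where
   \<epsilon>_x = 1 / LCM(1, x).  It remains to prove the real inequality
   5 ln (a b) \<le> 6 ln 2 max (pair_weight a b \<epsilon>_a \<epsilon>_b) (a + b - 2).
   For a b \<ge> 21/10 the second term suffices, by AM-GM.  Otherwise \<epsilon>_x \<le> 1/(4x) unless x is
   one of 2, 3/2, 4/3, 5/3, and the generic case and the few exceptional values follow from
   tangent-line bounds on ln together with 2/3 \<le> ln 2 \<le> 25/36; the inequality is tight at
   (a, b) = (3/2, 4/3). *)

section \<open>Least common multiples of positive reals\<close>

lemma of_int_mult_in_common_multiples: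
  assumes "L \<in> common_multiples N" and "(n::int) \<ge> 1"
  shows "of_int n * L \<in> common_multiples N"
proof -
  have "\<exists>j::int. of_int n * L = of_int j * x" if x: "x \<in> N" for x
  proof -
    obtain j :: int where "L = of_int j * x"
      using assms(1) x unfolding common_multiples_def by auto
    then show ?thesis by (intro exI[of _ "n * j"]) simp
  qed
  then show ?thesis using assms unfolding common_multiples_def by auto
qed

lemma Least_common_multiple:
  assumes "x \<in> N" and "x > 0" and "common_multiples N \<noteq> {}"
  shows "(LEAST L. L \<in> common_multiples N) \<in> common_multiples N"
    and "y \<in> common_multiples N \<Longrightarrow> (LEAST L. L \<in> common_multiples N) \<le> y"
proof -
  let ?C = "common_multiples N"
  have multiple_of_x: "\<exists>n::nat. n > 0 \<and> y = real n * x" if y: "y \<in> ?C" for y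
  proof -
    obtain j :: int where j: "y = of_int j * x" "y > 0"
      using y assms(1) unfolding common_multiples_def by auto
    then have "j > 0" using \<open>x > 0\<close> by (simp add: zero_less_mult_iff)
    then show ?thesis using j by (intro exI[of _ "nat j"]) simp
  qed
  define n where "n = (LEAST n::nat. real n * x \<in> ?C)"
  obtain y0 where "y0 \<in> ?C" using assms(3) by auto
  then have "\<exists>n::nat. real n * x \<in> ?C" using multiple_of_x by metis
  then have n_in: "real n * x \<in> ?C" unfolding n_def by (rule LeastI_ex)
  have n_le: "real n * x \<le> y" if y: "y \<in> ?C" for y
  proof -
    obtain n' :: nat where "y = real n' * x" using multiple_of_x[OF y] by auto
    moreover have "n \<le> n'" unfolding n_def using y calculation by (auto intro: Least_le)
    ultimately show ?thesis using \<open>x > 0\<close> by (simp add: mult_right_mono)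
  qed
  have "(LEAST L. L \<in> ?C) = real n * x"
    by (rule Least_equality) (use n_in n_le in auto)
  then show "(LEAST L. L \<in> ?C) \<in> ?C" and "y \<in> ?C \<Longrightarrow> (LEAST L. L \<in> ?C) \<le> y"
    using n_in n_le by simp_all
qed

lemma common_multiple_eq_multiple_of_Least:
  assumes "x \<in> N" and "x > 0" and y: "y \<in> common_multiples N"
  shows "\<exists>n::int. n \<ge> 1 \<and> y = of_int n * (LEAST L. L \<in> common_multiples N)"
proof -
  let ?C = "common_multiples N"
  define L where "L = (LEAST L. L \<in> ?C)"
  have L_in: "L \<in> ?C" and L_le: "\<And>z. z \<in> ?C \<Longrightarrow> L \<le> z"
    using Least_common_multiple[OF assms(1,2)] y unfolding L_def by auto
  have "L > 0" "y > 0" using L_in y unfolding common_multiples_def by auto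
  define n where "n = \<lfloor>y / L\<rfloor>"
  define r where "r = y - of_int n * L"
  have "0 \<le> r" "r < L"
    using \<open>L > 0\<close> floor_divide_lower[of L y] floor_divide_upper[of L y]
    unfolding r_def n_def by (auto simp: algebra_simps)
  have r_multiple: "\<exists>j::int. r = of_int j * z" if z: "z \<in> N" for z
  proof -
    obtain i j :: int where "y = of_int i * z" "L = of_int j * z"
      using y L_in z unfolding common_multiples_def by blast
    then show ?thesis by (intro exI[of _ "i - n * j"]) (simp add: r_def algebra_simps)
  qed
  have "r = 0"
  proof (rule ccontr)
    assume "r \<noteq> 0"
    then have "r \<in> ?C" using \<open>0 \<le> r\<close> r_multiple unfolding common_multiples_def by auto
    then show False using L_le \<open>r < L\<close> by force
  qed
  then have "y = of_int n * L" unfolding r_def by simp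
  moreover have "n \<ge> 1"
    using \<open>y > 0\<close> \<open>L > 0\<close> calculation by (auto simp: zero_less_mult_iff)
  ultimately show ?thesis unfolding L_def by blast
qed

definition multiples_upto :: "real \<Rightarrow> real \<Rightarrow> real set" where
  "multiples_upto T x = {y. 0 < y \<and> y \<le> T \<and> (\<exists>j::int. y = of_int j * x)}"

lemma Inter_multiples_upto:
  assumes "B \<noteq> {}"
  shows "\<Inter> (multiples_upto T ` B) = {y \<in> common_multiples B. y \<le> T}"
  using assms unfolding multiples_upto_def common_multiples_def by auto

lemma card_Inter_multiples_upto:
  assumes "B \<noteq> {}" and "\<forall>x\<in>B. x > 0"
  shows "card (\<Inter> (multiples_upto T ` B)) = nat \<lfloor>T * inv_LCM B\<rfloor>"
proof (cases "common_multiples B = {}")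
  case True
  then show ?thesis using Inter_multiples_upto[OF assms(1)] unfolding inv_LCM_def by simp
next
  case False
  obtain x where x: "x \<in> B" "x > 0" using assms by auto
  define L where "L = (LEAST L. L \<in> common_multiples B)"
  have L_in: "L \<in> common_multiples B"
    using Least_common_multiple(1)[OF x False] unfolding L_def .
  then have "L > 0" unfolding common_multiples_def by auto
  have "{y \<in> common_multiples B. y \<le> T} = (\<lambda>n. of_int n * L) ` {1..\<lfloor>T / L\<rfloor>}"
  proof (intro equalityI subsetI)
    fix y assume y: "y \<in> {y \<in> common_multiples B. y \<le> T}"
    then obtain n :: int where "n \<ge> 1" "y = of_int n * L"
      using common_multiple_eq_multiple_of_Least[OF x] unfolding L_def by blast
    moreover have "n \<le> \<lfloor>T / L\<rfloor>"
      using y calculation \<open>L > 0\<close> by (simp add: le_floor_iff pos_le_divide_eq)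
    ultimately show "y \<in> (\<lambda>n. of_int n * L) ` {1..\<lfloor>T / L\<rfloor>}" by auto
  next
    fix y assume "y \<in> (\<lambda>n. of_int n * L) ` {1..\<lfloor>T / L\<rfloor>}"
    then obtain n :: int where n: "1 \<le> n" "n \<le> \<lfloor>T / L\<rfloor>" "y = of_int n * L" by auto
    then have "y \<le> T" using \<open>L > 0\<close> by (simp add: le_floor_iff pos_le_divide_eq)
    then show "y \<in> {y \<in> common_multiples B. y \<le> T}"
      using of_int_mult_in_common_multiples[OF L_in n(1)] n(3) by simp
  qed
  moreover have "inj_on (\<lambda>n. of_int n * L) {1..\<lfloor>T / L\<rfloor>}"
    using \<open>L > 0\<close> by (auto simp: inj_on_def)
  moreover have "inv_LCM B = 1 / L" unfolding inv_LCM_def L_def using False by simp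
  ultimately show ?thesis
    using Inter_multiples_upto[OF assms(1)] by (simp add: card_image)
qed

lemma finite_multiples_upto:
  assumes "x > 0"
  shows "finite (multiples_upto T x)"
proof (rule finite_subset)
  show "multiples_upto T x \<subseteq> (\<lambda>j. of_int j * x) ` {1..\<lfloor>T / x\<rfloor>}"
  proof
    fix y assume "y \<in> multiples_upto T x"
    then obtain j :: int where "0 < y" "y \<le> T" "y = of_int j * x"
      unfolding multiples_upto_def by auto
    with assms show "y \<in> (\<lambda>j. of_int j * x) ` {1..\<lfloor>T / x\<rfloor>}"
      by (auto simp: le_floor_iff pos_le_divide_eq zero_less_mult_iff)
  qed
qed simp

lemma inv_LCM_nonneg:
  assumes "B \<noteq> {}" and "\<forall>x\<in>B. x > 0"
  shows "inv_LCM B \<ge> 0"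
proof (cases "common_multiples B = {}")
  case False
  obtain x where "x \<in> B" "x > 0" using assms by auto
  then have "(LEAST L. L \<in> common_multiples B) > 0"
    using Least_common_multiple(1)[OF _ _ False] unfolding common_multiples_def by blast
  then show ?thesis unfolding inv_LCM_def by simp
qed (simp add: inv_LCM_def)

lemma card_Union_multiples_upto_approx:
  assumes fin: "finite S" and pos: "\<forall>x\<in>S. x > 0" and "T \<ge> 0"
  shows "\<bar>real (card (\<Union> (multiples_upto T ` S))) - T * incl_excl_sum S\<bar> \<le> 2 ^ card S"
proof -
  interpret Incl_Excl finite "\<lambda>A. real (card A)"
    by unfold_locales (auto simp: card_Un_disjnt)
  let ?P = "Pow S - {{}}"
  let ?d = "\<lambda>B. real (card (\<Inter> (multiples_upto T ` B))) - T * inv_LCM B"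
  have "{B. B \<subseteq> S \<and> B \<noteq> {}} = ?P" by auto
  then have "real (card (\<Union> (multiples_upto T ` S)))
      = (\<Sum>B\<in>?P. (- 1) ^ (card B + 1) * real (card (\<Inter> (multiples_upto T ` B))))"
    using restricted_indexed[OF fin, of "multiples_upto T"] pos finite_multiples_upto by simp
  moreover have "(\<Sum>B\<in>?P. (- 1) ^ (card B + 1) * ?d B)
      = (\<Sum>B\<in>?P. (- 1) ^ (card B + 1) * real (card (\<Inter> (multiples_upto T ` B))))
        - T * (\<Sum>B\<in>?P. (- 1) ^ (card B + 1) * inv_LCM B)"
    by (simp only: right_diff_distrib sum_subtractf sum_distrib_left mult.left_commute)
  ultimately have "real (card (\<Union> (multiples_upto T ` S))) - T * incl_excl_sum S
      = (\<Sum>B\<in>?P. (- 1) ^ (card B + 1) * ?d B)"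
    unfolding incl_excl_sum_def by simp
  also have "\<bar>\<dots>\<bar> \<le> (\<Sum>B\<in>?P. 1)"
  proof (rule order_trans[OF sum_abs sum_mono])
    fix B assume B: "B \<in> ?P"
    then have "B \<noteq> {}" "\<forall>x\<in>B. x > 0" using pos by auto
    then have "T * inv_LCM B \<ge> 0" using \<open>T \<ge> 0\<close> inv_LCM_nonneg by simp
    then show "\<bar>(- 1) ^ (card B + 1) * ?d B\<bar> \<le> 1"
      using card_Inter_multiples_upto[OF \<open>B \<noteq> {}\<close> \<open>\<forall>x\<in>B. x > 0\<close>]
      by (simp add: abs_mult) linarith
  qed
  also have "\<dots> \<le> 2 ^ card S"
    using fin by (simp add: card_Diff_subset card_Pow)
  finally show ?thesis .
qed

lemma incl_excl_sum_mono:
  assumes fin: "finite S" and pos: "\<forall>x\<in>S. x > 0" and sub: "S' \<subseteq> S"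
  shows "incl_excl_sum S' \<le> incl_excl_sum S"
proof (rule ccontr)
  assume "\<not> ?thesis"
  then have gap: "incl_excl_sum S' - incl_excl_sum S > 0" by simp
  have "finite S'" "\<forall>x\<in>S'. x > 0" using fin pos sub finite_subset by auto
  define K :: real where "K = 2 ^ card S + 2 ^ card S'"
  define T where "T = (K + 1) / (incl_excl_sum S' - incl_excl_sum S)"
  have "T > 0" unfolding T_def K_def using gap by (simp add: add_pos_nonneg)
  have "finite (\<Union> (multiples_upto T ` S))" using fin pos finite_multiples_upto by auto
  then have "card (\<Union> (multiples_upto T ` S')) \<le> card (\<Union> (multiples_upto T ` S))"
    by (rule card_mono) (use sub in auto)
  then have "T * (incl_excl_sum S' - incl_excl_sum S) \<le> K"
    using card_Union_multiples_upto_approx[OF fin pos, of T]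
      card_Union_multiples_upto_approx[OF \<open>finite S'\<close> \<open>\<forall>x\<in>S'. x > 0\<close>, of T] \<open>T > 0\<close>
    unfolding K_def by (simp add: abs_le_iff algebra_simps)
  moreover have "T * (incl_excl_sum S' - incl_excl_sum S) = K + 1"
    unfolding T_def using gap by simp
  ultimately show False by simp
qed

lemma inv_LCM_singleton:
  assumes "x > 0"
  shows "inv_LCM {x} = 1 / x"
proof -
  have x_in: "x \<in> common_multiples {x}"
    using assms unfolding common_multiples_def by (auto intro: exI[of _ 1])
  have "(LEAST L. L \<in> common_multiples {x}) = x"
  proof (rule Least_equality)
    fix y assume "y \<in> common_multiples {x}"
    then obtain j :: int where "y > 0" "y = of_int j * x"
      unfolding common_multiples_def by auto
    with assms show "x \<le> y" by (simp add: zero_less_mult_iff)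
  qed (rule x_in)
  then show ?thesis unfolding inv_LCM_def using x_in by auto
qed

lemma incl_excl_sum_doubleton:
  assumes "x > 0" and "y > 0"
  shows "incl_excl_sum {x, y} = 1 / x + 1 / y - inv_LCM {x, y}"
proof (cases "x = y")
  case True
  have "Pow {y} - {{}} = {{y}}" by auto
  then show ?thesis using True assms by (simp add: incl_excl_sum_def inv_LCM_singleton)
next
  case False
  have "Pow {x, y} - {{}} = {{x}, {y}, {x, y}}" by auto
  moreover have "{x} \<noteq> {y}" "{x} \<noteq> {x, y}" "{y} \<noteq> {x, y}" using False by auto
  ultimately show ?thesis using False assms by (simp add: incl_excl_sum_def inv_LCM_singleton)
qed

lemma inv_LCM_one_fraction:
  fixes i j :: int
  assumes "coprime i j" and "i > 0" and "j > 0"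
  shows "inv_LCM {1, of_int i / of_int j} = 1 / of_int i"
proof -
  let ?C = "common_multiples {1, of_int i / of_int j :: real}"
  have i_in: "of_int i \<in> ?C"
    using assms unfolding common_multiples_def by (auto intro: exI[of _ i] exI[of _ j])
  have "(LEAST L. L \<in> ?C) = of_int i"
  proof (rule Least_equality)
    fix y assume "y \<in> ?C"
    then obtain n l :: int where "y > 0" "y = of_int n" "y = of_int l * (of_int i / of_int j)"
      unfolding common_multiples_def by force
    then have "n > 0" and "j * n = l * i" using \<open>j > 0\<close> by (simp_all add: field_simps flip: of_int_mult)
    then have "i dvd n" using \<open>coprime i j\<close> by (metis coprime_dvd_mult_right_iff dvd_triv_right)
    with \<open>n > 0\<close> show "of_int i \<le> y" using \<open>y = of_int n\<close> by (simp add: zdvd_imp_le)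
  qed (rule i_in)
  then show ?thesis unfolding inv_LCM_def using i_in by auto
qed

lemma inv_LCM_one_eq_inverse_int:
  assumes "a > 0" and "common_multiples {1, a} \<noteq> {}"
  shows "\<exists>i j :: int. j \<ge> 1 \<and> of_int j * a = of_int i \<and> inv_LCM {1, a} = 1 / of_int i"
proof -
  define L where "L = (LEAST L. L \<in> common_multiples {1, a})"
  have "L \<in> common_multiples {1, a}"
    using Least_common_multiple(1)[of 1 "{1, a}"] assms(2) unfolding L_def by simp
  then obtain i j :: int where "L > 0" "L = of_int i" "L = of_int j * a"
    unfolding common_multiples_def by force
  moreover from this have "j \<ge> 1"
    using \<open>a > 0\<close> by (smt (verit) mult_nonpos_nonneg of_int_le_0_iff)
  moreover have "inv_LCM {1, a} = 1 / L" unfolding inv_LCM_def L_def using assms(2) by simp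
  ultimately show ?thesis by metis
qed

(* e plays the role of 1 / LCM(1, a).  For 1 < a < 21/10 it is at most 1/(4a) unless
   a = i/j with j \<le> 3, which leaves the four values below. *)
definition lcm_defect_admissible :: "real \<Rightarrow> real \<Rightarrow> bool" where
  "lcm_defect_admissible a e \<longleftrightarrow> 0 \<le> e \<and>
     (e \<le> 1 / (4 * a) \<or> a = 2 \<or> (a = 3/2 \<and> e \<le> 1/3) \<or> (a = 4/3 \<and> e \<le> 1/4) \<or> (a = 5/3 \<and> e \<le> 1/5))"

lemma lcm_defect_admissible_inv_LCM:
  assumes "1 < a" and "a < 21/10"
  shows "lcm_defect_admissible a (inv_LCM {1, a})"
proof (cases "common_multiples {1, a} = {}")
  case True
  then show ?thesis using assms unfolding lcm_defect_admissible_def inv_LCM_def by simp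
next
  case False
  then obtain i j :: int
    where j: "j \<ge> 1" and ja: "of_int j * a = of_int i" and e: "inv_LCM {1, a} = 1 / of_int i"
    using inv_LCM_one_eq_inverse_int[OF _ False] assms(1) by (meson less_trans zero_less_one)
  have "of_int j * 1 < of_int j * a" "of_int j * a < of_int j * (21/10 :: real)"
    using j assms by (intro mult_strict_left_mono; simp)+
  then have "real_of_int j < of_int i" "real_of_int (10 * i) < of_int (21 * j)"
    using ja by simp_all
  then have ij: "j < i" "10 * i < 21 * j" by (simp_all only: of_int_less_iff)
  show ?thesis
  proof (cases "j \<ge> 4")
    case True
    have "4 * a \<le> of_int j * a" using True assms by (intro mult_right_mono) auto
    then have "1 / of_int i \<le> 1 / (4 * a)"
      using ja assms by (intro divide_left_mono) auto
    then show ?thesis using e ij j unfolding lcm_defect_admissible_def by simp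
  next
    case False
    with j ij have "(j, i) \<in> {(1, 2), (2, 3), (2, 4), (3, 4), (3, 5), (3, 6)}" by auto
    moreover have "a = of_int i / of_int j" using ja j by (simp add: field_simps)
    ultimately show ?thesis using e unfolding lcm_defect_admissible_def by auto
  qed
qed

section \<open>The real inequality\<close>

lemmas ln2_bounds = ln2_ge_two_thirds ln2_le_25_over_36

lemma convex_quadratic_nonpos_between:
  fixes A B C x y t :: real
  assumes "0 \<le> A" "x \<le> t" "t \<le> y"
    and "A * x^2 + B * x + C \<le> 0" "A * y^2 + B * y + C \<le> 0"
  shows "A * t^2 + B * t + C \<le> 0"
proof (cases "x = y")
  case False
  let ?q = "\<lambda>s. A * s^2 + B * s + C"
  have "(y - x) * ?q t = (y - t) * ?q x + (t - x) * ?q y - A * (y - x) * (t - x) * (y - t)"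
    by (simp add: algebra_simps power2_eq_square)
  also have "\<dots> \<le> 0"
  proof -
    have "(y - t) * ?q x \<le> 0" "(t - x) * ?q y \<le> 0" "0 \<le> A * (y - x) * (t - x) * (y - t)"
      using assms by (simp_all add: mult_nonneg_nonpos)
    then show ?thesis by linarith
  qed
  finally show ?thesis using False assms(2,3) by (simp add: mult_le_0_iff)
qed (use assms in simp)

lemma ln_le_tangent_at_2:
  fixes x :: real
  assumes "x > 0"
  shows "ln x \<le> ln 2 + x / 2 - 1"
  using ln_le_minus_one[of "x / 2"] assms by (simp add: ln_div)

lemma ln_le_half_diff_inverse:
  fixes x :: real
  assumes "x \<ge> 1"
  shows "ln x \<le> (x - 1 / x) / 2"
  using real_le_x_sinh[of "ln x"] assms by (simp add: inverse_eq_divide)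

(* Bounding ln by its tangent at 2 and multiplying by b turns the claim into a convex
   quadratic inequality in b, which only has to be checked at the endpoints. *)
lemma five_ln_mult_le_of_endpoints:
  fixes a b c d u v :: real
  assumes "0 < a" "0 < u" "u \<le> b" "b \<le> v"
    and "5 * a / 2 * u^2 - 5 * u \<le> ln 2 * ((6 * c - 5) * u - 6 * d)"
    and "5 * a / 2 * v^2 - 5 * v \<le> ln 2 * ((6 * c - 5) * v - 6 * d)"
  shows "5 * ln (a * b) \<le> 6 * ln 2 * (c - d / b)"
proof -
  have "b > 0" using assms by simp
  have "5 * a / 2 * b^2 + (- 5 - ln 2 * (6 * c - 5)) * b + 6 * d * ln 2 \<le> 0"
    by (rule convex_quadratic_nonpos_between[of _ u _ v]) (use assms in \<open>auto simp: algebra_simps\<close>)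
  then have "0 \<le> - (5 * a / 2 * b^2 + (- 5 - ln 2 * (6 * c - 5)) * b + 6 * d * ln 2) / b"
    using \<open>b > 0\<close> by simp
  also have "\<dots> = 6 * ln 2 * (c - d / b) - 5 * (ln 2 + a * b / 2 - 1)"
    using \<open>b > 0\<close> by (simp add: field_simps power2_eq_square)
  finally have "5 * (ln 2 + a * b / 2 - 1) \<le> 6 * ln 2 * (c - d / b)" by simp
  then show ?thesis using ln_le_tangent_at_2[of "a * b"] assms \<open>b > 0\<close> by simp
qed

lemma five_ln_mult_le_sum:
  fixes a b :: real
  assumes "1 < a" "1 < b" "21/10 \<le> a * b"
  shows "5 * ln (a * b) \<le> 6 * ln 2 * (a + b - 2)"
proof -
  define t where "t = sqrt (a * b)"
  have "t > 1" and ab: "a * b = t^2" and "2 * t \<le> a + b"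
    using assms arith_geo_mean_sqrt[of a b] unfolding t_def by (auto simp: one_less_mult)
  have "1449/1000 \<le> t"
    unfolding t_def by (rule real_le_rsqrt) (use assms in \<open>simp add: power2_eq_square\<close>)
  have "5 * ln (t^2) \<le> 6 * ln 2 * (2 * t - 2)"
  proof (cases "5/3 \<le> t")
    case True
    have "5 * (t + 1) \<le> 8 * t" using True by simp
    also have "\<dots> \<le> 12 * ln 2 * t" using ln2_bounds \<open>t > 1\<close> by (intro mult_right_mono) auto
    finally have "(t - 1) * (5 * (t + 1)) \<le> (t - 1) * (12 * ln 2 * t)"
      using \<open>t > 1\<close> by (intro mult_left_mono) auto
    then have "5 * (t - 1 / t) \<le> 6 * ln 2 * (2 * t - 2)"
      using \<open>t > 1\<close> by (simp add: field_simps)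
    moreover have "ln (t^2) = 2 * ln t" using \<open>t > 1\<close> by (simp add: ln_realpow)
    ultimately show ?thesis using ln_le_half_diff_inverse[of t] \<open>t > 1\<close> by simp
  next
    case False
    have "5/2 * t^2 + (- 12 * ln 2) * t + (17 * ln 2 - 5) \<le> 0"
      by (rule convex_quadratic_nonpos_between[of _ "1449/1000" _ "5/3"])
        (use False \<open>1449/1000 \<le> t\<close> ln2_bounds in \<open>simp_all add: power2_eq_square\<close>)
    then show ?thesis using ln_le_tangent_at_2[of "t^2"] \<open>t > 1\<close>
      by (simp add: algebra_simps power2_eq_square)
  qed
  also have "\<dots> \<le> 6 * ln 2 * (a + b - 2)"
    using \<open>2 * t \<le> a + b\<close> ln2_bounds by (intro mult_left_mono) auto
  finally show ?thesis using ab by simp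
qed

(* The bracket of V_J after replacing \<Sigma>^prim and \<Sigma>^sec by the sums over {1, a} and
   {1, b}, with a = \<alpha>, b = m^(1/k) / \<alpha>, ea = 1/LCM(1, a), eb = 1/LCM(1, b). *)
definition pair_weight :: "real \<Rightarrow> real \<Rightarrow> real \<Rightarrow> real \<Rightarrow> real" where
  "pair_weight a b ea eb = (1 - 1 / b) * (1 + 1 / a - ea) + (1 - 1 / a) * (1 + 1 / b - eb)"

lemma pair_weight_commute: "pair_weight a b ea eb = pair_weight b a eb ea"
  unfolding pair_weight_def by (simp add: algebra_simps)

lemma pair_weight_ge:
  assumes "1 < a" "1 < b" "ea \<le> E" "eb \<le> 1 / (4 * b)"
  shows "2 - E - (2 / a - E + (1 - 1 / a) / 4) / b \<le> pair_weight a b ea eb"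
proof -
  have "(1 - 1 / b) * ea \<le> (1 - 1 / b) * E" "(1 - 1 / a) * eb \<le> (1 - 1 / a) * (1 / (4 * b))"
    using assms by (intro mult_left_mono; simp)+
  moreover have "pair_weight a b ea eb = 2 - 2 / (a * b) - (1 - 1 / b) * ea - (1 - 1 / a) * eb"
    "2 - E - (2 / a - E + (1 - 1 / a) / 4) / b = 2 - 2 / (a * b) - (1 - 1 / b) * E - (1 - 1 / a) * (1 / (4 * b))"
    unfolding pair_weight_def using assms by (simp_all add: field_simps)
  ultimately show ?thesis by linarith
qed

lemma ln2_mult_max_ge:
  fixes x W V :: real
  assumes "x \<le> 6 * ln 2 * W \<or> x \<le> 6 * ln 2 * V"
  shows "x \<le> 6 * ln 2 * max W V"
  using assms by (auto simp: max_mult_distrib_left le_max_iff_disj)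

lemma five_ln_mult_le_pair_weight:
  assumes "1 < a" "1 < b" "a * b < 21/10"
    and "0 \<le> ea" "ea \<le> 1 / (4 * a)" "0 \<le> eb" "eb \<le> 1 / (4 * b)"
  shows "5 * ln (a * b) \<le> 6 * ln 2 * pair_weight a b ea eb"
proof -
  define P where "P = a * b"
  have "P > 1" unfolding P_def using assms by (simp add: less_1_mult)
  have "2 - 1 / (4 * a) - (2 / a - 1 / (4 * a) + (1 - 1 / a) / 4) / b \<le> pair_weight a b ea eb"
    using assms by (intro pair_weight_ge) auto
  moreover have "7/4 - 7/4 / P \<le> 2 - 1 / (4 * a) - (2 / a - 1 / (4 * a) + (1 - 1 / a) / 4) / b"
  proof -
    have "2 - 1 / (4 * a) - (2 / a - 1 / (4 * a) + (1 - 1 / a) / 4) / b - (7/4 - 7/4 / P)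
        = (1 - 1 / a) * (1 - 1 / b) / 4"
      unfolding P_def using assms by (simp add: field_simps)
    moreover have "0 \<le> (1 - 1 / a) * (1 - 1 / b) / 4" using assms by simp
    ultimately show ?thesis by linarith
  qed
  ultimately have weight: "7/4 - 7/4 / P \<le> pair_weight a b ea eb" by linarith
  have "5 * ln P \<le> 6 * ln 2 * (7/4 - 7/4 / P)"
  proof (cases "3/2 \<le> P")
    case True
    show ?thesis
      using five_ln_mult_le_of_endpoints[of 1 "3/2" P "21/10" "7/4" "7/4"] True assms ln2_bounds
      unfolding P_def by (simp add: power2_eq_square)
  next
    case False
    (* near P = 1 the tangent at 2 is too weak; (P - 1/P)/2 = sinh (ln P) is tight there *)
    have "0 \<le> 21/2 * ln 2 - 5 * (P + 1) / 2" using False ln2_bounds by argo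
    then have "0 \<le> (P - 1) * (21/2 * ln 2 - 5 * (P + 1) / 2) / P"
      using \<open>P > 1\<close> by (intro divide_nonneg_pos mult_nonneg_nonneg) auto
    also have "\<dots> = 6 * ln 2 * (7/4 - 7/4 / P) - 5 * ((P - 1 / P) / 2)"
      using \<open>P > 1\<close> by (simp add: field_simps)
    finally have "5 * ((P - 1 / P) / 2) \<le> 6 * ln 2 * (7/4 - 7/4 / P)" by argo
    then show ?thesis using ln_le_half_diff_inverse[of P] \<open>P > 1\<close> by simp
  qed
  also have "\<dots> \<le> 6 * ln 2 * pair_weight a b ea eb"
    using weight by (intro mult_left_mono) simp_all
  finally show ?thesis unfolding P_def .
qed

lemma five_ln_mult_le_max_exceptional:
  assumes "1 < b" "a * b < 21/10" "0 \<le> ea" "lcm_defect_admissible b eb"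
    and "a = 2 \<or> (a = 3/2 \<and> ea \<le> 1/3) \<or> (a = 4/3 \<and> ea \<le> 1/4) \<or> (a = 5/3 \<and> ea \<le> 1/5)"
  shows "5 * ln (a * b) \<le> 6 * ln 2 * max (pair_weight a b ea eb) (a + b - 2)"
proof (rule ln2_mult_max_ge)
  have "0 \<le> eb" using assms(4) unfolding lcm_defect_admissible_def by simp
  consider "a = 2" | "a = 3/2" "ea \<le> 1/3" | "a = 4/3" "ea \<le> 1/4" | "a = 5/3" "ea \<le> 1/5"
    using assms(5) by blast
  then show "5 * ln (a * b) \<le> 6 * ln 2 * pair_weight a b ea eb
      \<or> 5 * ln (a * b) \<le> 6 * ln 2 * (a + b - 2)"
  proof cases
    case 1
    have "2/3 * (6 * b - 5) \<le> ln 2 * (6 * b - 5)"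
      using ln2_bounds assms(1) by (intro mult_right_mono) auto
    moreover have "ln (2 * b) \<le> ln 2 + b - 1" using ln_le_tangent_at_2[of "2 * b"] assms(1) by simp
    moreover have "b < 21/20" using assms(2) 1 by simp
    ultimately have "5 * ln (2 * b) \<le> 6 * ln 2 * (2 + b - 2)" by (simp add: algebra_simps)
    then show ?thesis using 1 by simp
  next
    case 2
    show ?thesis
    proof (cases "4/3 \<le> b")
      case True
      have "2/3 * (6 * b - 8) \<le> ln 2 * (6 * b - 8)"
        using ln2_bounds True by (intro mult_right_mono) auto
      moreover have "ln (3/2 * b) \<le> ln 2 + 3/4 * b - 1"
        using ln_le_tangent_at_2[of "3/2 * b"] assms(1) by simp
      ultimately have "5 * ln (3/2 * b) \<le> 6 * ln 2 * (3/2 + b - 2)"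
        using True by (simp add: algebra_simps)
      then show ?thesis unfolding 2(1) by simp
    next
      case False
      then have "eb \<le> 1 / (4 * b)" using assms(4) unfolding lcm_defect_admissible_def by auto
      then have "5/3 - (13/12) / b \<le> pair_weight a b ea eb"
        using pair_weight_ge[of "3/2" b ea "1/3" eb] assms(1) 2 unfolding 2(1) by simp
      moreover have "5 * ln (3/2 * b) \<le> 6 * ln 2 * (5/3 - (13/12) / b)"
        using five_ln_mult_le_of_endpoints[of "3/2" 1 b "4/3" "5/3" "13/12"] False assms(1) ln2_bounds
        by (simp add: power2_eq_square)
      ultimately show ?thesis unfolding 2(1) by (auto intro: order_trans mult_left_mono)
    qed
  next
    case 3
    have "b < 63/40" using assms(2) unfolding 3(1) by simp
    consider "eb \<le> 1 / (4 * b)" | "b = 4/3" "eb \<le> 1/4" | "b = 3/2"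
      using assms(2,4) unfolding lcm_defect_admissible_def 3(1) by auto
    then show ?thesis
    proof cases
      case 1
      then have "7/4 - (21/16) / b \<le> pair_weight a b ea eb"
        using pair_weight_ge[of "4/3" b ea "1/4" eb] assms(1) 3 unfolding 3(1) by simp
      moreover have "5 * ln (4/3 * b) \<le> 6 * ln 2 * (7/4 - (21/16) / b)"
        using five_ln_mult_le_of_endpoints[of "4/3" 1 b "63/40" "7/4" "21/16"]
          \<open>b < 63/40\<close> assms(1) ln2_bounds
        by (simp add: power2_eq_square)
      ultimately show ?thesis unfolding 3(1) by (auto intro: order_trans mult_left_mono)
    next
      case b: 2
      have "3/4 \<le> pair_weight a b ea eb"
        using 3 b \<open>0 \<le> ea\<close> \<open>0 \<le> eb\<close> unfolding pair_weight_def 3(1) b(1) by simp argo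
      have "5 * ln (a * b) \<le> 6 * ln 2 * (3/4)"
        using ln_le_tangent_at_2[of "4/3 * (4/3)"] ln2_bounds unfolding 3(1) b(1) by argo
      also have "\<dots> \<le> 6 * ln 2 * pair_weight a b ea eb"
        using \<open>3/4 \<le> pair_weight a b ea eb\<close> by (intro mult_left_mono) simp_all
      finally show ?thesis ..
    next
      case b: 3
      show ?thesis unfolding 3(1) b by simp
    qed
  next
    case 4
    have "b < 63/50" using assms(2) unfolding 4(1) by simp
    then have "eb \<le> 1 / (4 * b)" using assms(4) unfolding lcm_defect_admissible_def by auto
    then have "9/5 - (11/10) / b \<le> pair_weight a b ea eb"
      using pair_weight_ge[of "5/3" b ea "1/5" eb] assms(1) 4 unfolding 4(1) by simp
    moreover have "5 * ln (5/3 * b) \<le> 6 * ln 2 * (9/5 - (11/10) / b)"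
      using five_ln_mult_le_of_endpoints[of "5/3" 1 b "63/50" "9/5" "11/10"]
        \<open>b < 63/50\<close> assms(1) ln2_bounds
      by (simp add: power2_eq_square)
    ultimately show ?thesis unfolding 4(1) by (auto intro: order_trans mult_left_mono)
  qed
qed

lemma five_ln_mult_le_max_pair_weight:
  fixes a b :: real
  assumes "1 < a" "1 < b"
  shows "5 * ln (a * b)
    \<le> 6 * ln 2 * max (pair_weight a b (inv_LCM {1, a}) (inv_LCM {1, b})) (a + b - 2)"
    (is "_ \<le> 6 * ln 2 * max (pair_weight a b ?ea ?eb) _")
proof (cases "21/10 \<le> a * b")
  case True
  then show ?thesis using five_ln_mult_le_sum[OF assms] by (intro ln2_mult_max_ge) simp
next
  case False
  have "a < a * b" "b < a * b" using assms by simp_all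
  then have "a < 21/10" "b < 21/10" using False by linarith+
  then have admissible: "lcm_defect_admissible a ?ea" "lcm_defect_admissible b ?eb"
    using assms by (simp_all add: lcm_defect_admissible_inv_LCM)
  then consider "?ea \<le> 1 / (4 * a)" "?eb \<le> 1 / (4 * b)"
    | "a = 2 \<or> (a = 3/2 \<and> ?ea \<le> 1/3) \<or> (a = 4/3 \<and> ?ea \<le> 1/4) \<or> (a = 5/3 \<and> ?ea \<le> 1/5)"
    | "b = 2 \<or> (b = 3/2 \<and> ?eb \<le> 1/3) \<or> (b = 4/3 \<and> ?eb \<le> 1/4) \<or> (b = 5/3 \<and> ?eb \<le> 1/5)"
    unfolding lcm_defect_admissible_def by argo
  then show ?thesis
  proof cases
    case 1
    then show ?thesis
      using False admissible assms five_ln_mult_le_pair_weight[of a b ?ea ?eb]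
      unfolding lcm_defect_admissible_def by (intro ln2_mult_max_ge) simp
  next
    case 2
    then show ?thesis
      using False admissible assms
      by (intro five_ln_mult_le_max_exceptional) (simp_all add: lcm_defect_admissible_def)
  next
    case 3
    then have "5 * ln (b * a) \<le> 6 * ln 2 * max (pair_weight b a ?eb ?ea) (b + a - 2)"
      using False admissible assms
      by (intro five_ln_mult_le_max_exceptional) (simp_all add: lcm_defect_admissible_def mult.commute)
    then show ?thesis by (simp add: pair_weight_commute mult.commute add.commute)
  qed
qed

section \<open>Reduction of V_J and V_H\<close>

lemma of_nat_divide_ln_eq_inverse_ln_root:
  assumes "m > 0"
  shows "real k / ln (real m) = 1 / ln (real m powr (1 / real k))"
  using assms by (simp add: ln_powr)

lemma V_H_eq_root:
  assumes "m > 0"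
  shows "V_H m k \<alpha> = (\<alpha> + real m powr (1 / real k) / \<alpha> - 2) / ln (real m powr (1 / real k))"
  unfolding V_H_def of_nat_divide_ln_eq_inverse_ln_root[OF assms] by simp

lemma Sigma_prim_ge:
  assumes "m > 0" "k \<ge> 1" "\<alpha> > 0"
  shows "1 + 1 / \<alpha> - inv_LCM {1, \<alpha>} \<le> Sigma_prim m k \<alpha>"
proof -
  have "{1, \<alpha>} \<subseteq> S_prim m k \<alpha>"
    unfolding S_prim_def using assms by (auto intro!: image_eqI[of _ _ 1])
  moreover have "\<forall>x\<in>S_prim m k \<alpha>. x > 0" unfolding S_prim_def using assms by auto
  ultimately show ?thesis
    unfolding Sigma_prim_def using incl_excl_sum_mono[of "S_prim m k \<alpha>" "{1, \<alpha>}"]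
      incl_excl_sum_doubleton[of 1 \<alpha>] assms by (simp add: S_prim_def)
qed

lemma Sigma_sec_ge:
  assumes "m > 0" "k \<ge> 1" "\<alpha> > 0"
  shows "1 + \<alpha> / real m powr (1 / real k) - inv_LCM {1, real m powr (1 / real k) / \<alpha>}
    \<le> Sigma_sec m k \<alpha>"
proof -
  have "{1, real m powr (1 / real k) / \<alpha>} \<subseteq> S_sec m k \<alpha>"
    unfolding S_sec_def using assms by (auto intro!: image_eqI[of _ _ 1])
  moreover have "\<forall>x\<in>S_sec m k \<alpha>. x > 0" unfolding S_sec_def using assms by auto
  ultimately show ?thesis
    unfolding Sigma_sec_def
    using incl_excl_sum_mono[of "S_sec m k \<alpha>" "{1, real m powr (1 / real k) / \<alpha>}"]
      incl_excl_sum_doubleton[of 1 "real m powr (1 / real k) / \<alpha>"] assms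
    by (simp add: S_sec_def)
qed

lemma V_J_ge_pair_weight:
  fixes m k :: nat and \<alpha> M :: real
  defines "M \<equiv> real m powr (1 / real k)"
  assumes "k \<ge> 1" and "1 < \<alpha>" and "\<alpha> < M"
  shows "pair_weight \<alpha> (M / \<alpha>) (inv_LCM {1, \<alpha>}) (inv_LCM {1, M / \<alpha>}) / ln M \<le> V_J m k \<alpha>"
proof -
  have "m > 0" using assms by (cases "m = 0") auto
  have "M > 1" using assms by simp
  then have "\<alpha> / M \<le> 1" using \<open>\<alpha> < M\<close> by simp
  have "(1 - \<alpha> / M) * (1 + 1 / \<alpha> - inv_LCM {1, \<alpha>}) \<le> (1 - \<alpha> / M) * Sigma_prim m k \<alpha>"
    using Sigma_prim_ge[OF \<open>m > 0\<close>] assms \<open>\<alpha> / M \<le> 1\<close> by (intro mult_left_mono) simp_all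
  moreover have "(1 - 1 / \<alpha>) * (1 + \<alpha> / M - inv_LCM {1, M / \<alpha>}) \<le> (1 - 1 / \<alpha>) * Sigma_sec m k \<alpha>"
    using Sigma_sec_ge[OF \<open>m > 0\<close>] assms by (intro mult_left_mono) simp_all
  ultimately have "pair_weight \<alpha> (M / \<alpha>) (inv_LCM {1, \<alpha>}) (inv_LCM {1, M / \<alpha>})
      \<le> (1 - \<alpha> / M) * Sigma_prim m k \<alpha> + (1 - 1 / \<alpha>) * Sigma_sec m k \<alpha>"
    unfolding pair_weight_def by simp
  moreover have "V_J m k \<alpha> = ((1 - \<alpha> / M) * Sigma_prim m k \<alpha> + (1 - 1 / \<alpha>) * Sigma_sec m k \<alpha>) / ln M"
    unfolding V_J_def of_nat_divide_ln_eq_inverse_ln_root[OF \<open>m > 0\<close>] M_def by simp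
  ultimately show ?thesis using \<open>M > 1\<close> by (simp only: divide_right_mono ln_ge_zero less_imp_le)
qed

lemma V_J_V_H_at_2_1_three_halves:
  "V_J 2 1 (3/2) = 5 / (6 * ln 2)" "V_H 2 1 (3/2) = 5 / (6 * ln 2)"
proof -
  have "S_prim 2 1 (3/2) = {1, of_int 3 / of_int 2}" "S_sec 2 1 (3/2) = {1, of_int 4 / of_int 3}"
    unfolding S_prim_def S_sec_def by auto
  then have prim: "Sigma_prim 2 1 (3/2) = 4/3" and sec: "Sigma_sec 2 1 (3/2) = 3/2"
    unfolding Sigma_prim_def Sigma_sec_def
    using inv_LCM_one_fraction[OF coprime_add_one_left[of 2]]
      inv_LCM_one_fraction[OF coprime_add_one_left[of 3]]
    by (simp_all add: incl_excl_sum_doubleton del: of_int_numeral)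
  show "V_J 2 1 (3/2) = 5 / (6 * ln 2)" unfolding V_J_def prim sec by simp
  show "V_H 2 1 (3/2) = 5 / (6 * ln 2)" unfolding V_H_def by simp
qed

theorem lemma4p3:
  shows "(\<forall>(m::nat) (k::nat) (\<alpha>::real).
            m \<ge> 2 \<longrightarrow> k \<ge> 1 \<longrightarrow> 1 < \<alpha> \<longrightarrow> \<alpha> < real m powr (1 / real k) \<longrightarrow>
            max (V_J m k \<alpha>) (V_H m k \<alpha>) \<ge> 5 / (6 * ln 2))
         \<and> max (V_J 2 1 (3/2)) (V_H 2 1 (3/2)) = 5 / (6 * ln 2)"
proof (intro conjI allI impI)
  fix m k :: nat and \<alpha> :: real
  assume "m \<ge> 2" "k \<ge> 1" "1 < \<alpha>" "\<alpha> < real m powr (1 / real k)"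
  define M where "M = real m powr (1 / real k)"
  have "1 < M / \<alpha>" "\<alpha> * (M / \<alpha>) = M" "1 < M"
    using \<open>1 < \<alpha>\<close> \<open>\<alpha> < real m powr (1 / real k)\<close> unfolding M_def by simp_all
  then have "ln M > 0" by simp
  let ?W = "pair_weight \<alpha> (M / \<alpha>) (inv_LCM {1, \<alpha>}) (inv_LCM {1, M / \<alpha>})"
  have "5 * ln M \<le> 6 * ln 2 * max ?W (\<alpha> + M / \<alpha> - 2)"
    using five_ln_mult_le_max_pair_weight[OF \<open>1 < \<alpha>\<close> \<open>1 < M / \<alpha>\<close>] \<open>\<alpha> * (M / \<alpha>) = M\<close> by simp
  then have "5 / (6 * ln 2) \<le> max ?W (\<alpha> + M / \<alpha> - 2) / ln M"
    using \<open>ln M > 0\<close> by (simp add: field_simps)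
  also have "\<dots> = max (?W / ln M) ((\<alpha> + M / \<alpha> - 2) / ln M)"
    using \<open>ln M > 0\<close> by (simp add: max_divide_distrib_right)
  also have "\<dots> \<le> max (V_J m k \<alpha>) (V_H m k \<alpha>)"
    using V_J_ge_pair_weight[OF \<open>k \<ge> 1\<close> \<open>1 < \<alpha>\<close>] V_H_eq_root[of m k \<alpha>] \<open>m \<ge> 2\<close>
      \<open>\<alpha> < real m powr (1 / real k)\<close> unfolding M_def by (intro max.mono) simp_all
  finally show "5 / (6 * ln 2) \<le> max (V_J m k \<alpha>) (V_H m k \<alpha>)" .
next
  show "max (V_J 2 1 (3/2)) (V_H 2 1 (3/2)) = 5 / (6 * ln 2)"
    using V_J_V_H_at_2_1_three_halves by simp
qed

end
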